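(* Let $p>q\ge1$ be coprime integers such that $\frac pq=[a_1,\dots,a_h]$ with $a_1,\dots,a_h\ge5$. Then $\mathbf Z_{p,q}=\{(1,2,\dots,2,1)\}$.
   Context: $[c_1,\dots,c_k]=c_1-\cfrac{1}{c_2-\cfrac{1}{\ddots-\cfrac1{c_k}}}$. A $k$-tuple of non-negative integers $(n_1,\dots,n_k)$ is admissible if $[n_j,\dots,n_k]>0$ for $j=2,\dots,k$ (all denominators in the continued fraction are positive). Write $\frac{p}{p-q}=[b_1,\dots,b_k]$ with all $b_i\ge2$ (uniquely). $\mathbf Z_{p,q}\subset\mathbb Z^k$ is the set of admissible $k$-tuples of non-negative integers $(n_1,\dots,n_k)$ with $[n_1,\dots,n_k]=0$ and $0\le n_i\le b_i$ for $i=1,\dots,k$. The tuple $(1,2,\dots,2,1)$ has length $k$. *)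

theory Defs
  imports Complex_Main
begin

text \<open>Hirzebruch--Jung continued fraction
  [c_1,...,c_k] = c_1 - 1/(c_2 - 1/(... - 1/c_k)), over the rationals.
  The value on the empty list is an irrelevant default.\<close>
fun hjcf :: "int list \<Rightarrow> rat" where
  "hjcf [] = 0"
| "hjcf [c] = of_int c"
| "hjcf (c # d # cs) = of_int c - 1 / hjcf (d # cs)"

definition admissible :: "int list \<Rightarrow> bool" where
  "admissible ns \<longleftrightarrow> (\<forall>i. 1 \<le> i \<and> i < length ns \<longrightarrow> hjcf (drop i ns) > 0)"

definition hj_b :: "int \<Rightarrow> int \<Rightarrow> int list" where
  "hj_b p q = (THE bs. bs \<noteq> [] \<and> (\<forall>b\<in>set bs. b \<ge> 2) \<and>
                       hjcf bs = of_int p / of_int (p - q))"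

definition Z_set :: "int \<Rightarrow> int \<Rightarrow> int list set" where
  "Z_set p q = {ns. length ns = length (hj_b p q) \<and> (\<forall>n\<in>set ns. n \<ge> 0) \<and>
                    admissible ns \<and> hjcf ns = 0 \<and>
                    (\<forall>i < length ns. ns ! i \<le> hj_b p q ! i)}"

definition one_twos_one :: "nat \<Rightarrow> int list" where
  "one_twos_one k = map (\<lambda>i. if i = 0 \<or> i = k - 1 then 1 else 2) [0..<k]"

end

theory Submission
  imports Defs
begin

text \<open>By Riemenschneider duality, \<open>a\<^sub>i \<ge> 5\<close> forces \<open>p/(p-q) = [2, b\<^sub>2, ..., b\<^sub>k]\<close>
  with all \<open>b\<^sub>i \<in> {2,3}\<close>, every 3 followed by at least two 2s, and at least three 2s at
  the end. Reading an element of \<open>Z\<^sub>p\<^sub>,\<^sub>q\<close> from the right, the value \<open>v\<close> of each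
  suffix is either 1, the suffix being \<open>(2,...,2,1)\<close>, or satisfies \<open>v > 1\<close> with
  \<open>1/(v-1)\<close> bounded below by a weight of the corresponding suffix of \<open>b\<close>, or is so
  small that \<open>1/v > 2\<close>. Since \<open>n\<^sub>1 = 1/[n\<^sub>2,...,n\<^sub>k] \<le> b\<^sub>1 = 2\<close> is an integer, only the
  first alternative survives.\<close>

lemma hjcf_Cons: "xs \<noteq> [] \<Longrightarrow> hjcf (c # xs) = of_int c - 1 / hjcf xs"
  by (cases xs) auto

lemma one_div_one_minus_one_div:
  fixes v :: "'a::linordered_field"
  assumes "1 < v"
  shows "1 / (1 - 1 / v) = 1 + 1 / (v - 1)"
  using assms by (simp add: field_simps)

lemma hjcf_gt_one: "xs \<noteq> [] \<Longrightarrow> \<forall>x\<in>set xs. 2 \<le> x \<Longrightarrow> 1 < hjcf xs"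
proof (induction xs rule: hjcf.induct)
  case (3 c d cs)
  then have "1 / hjcf (d # cs) < 1" "(2::rat) \<le> of_int c" by simp_all
  then show ?case by simp
qed auto

lemma hjcf_Cons_bounds:
  assumes "xs \<noteq> []" "\<forall>x\<in>set xs. 2 \<le> x"
  shows "of_int c - 1 < hjcf (c # xs)" "hjcf (c # xs) < of_int c"
  using hjcf_gt_one[OF assms] assms(1) by (simp_all add: hjcf_Cons)

lemma ceiling_hjcf_Cons: "\<forall>x\<in>set xs. 2 \<le> x \<Longrightarrow> \<lceil>hjcf (c # xs)\<rceil> = c"
  by (cases "xs = []") (auto simp: ceiling_eq_iff dest: hjcf_Cons_bounds[where c = c])

lemma hjcf_inj:
  assumes "xs \<noteq> []" "\<forall>x\<in>set xs. 2 \<le> x" "ys \<noteq> []" "\<forall>y\<in>set ys. 2 \<le> y"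
    and "hjcf xs = hjcf ys"
  shows "xs = ys"
  using assms
proof (induction xs arbitrary: ys)
  case (Cons c xs)
  then obtain d ys' where ys: "ys = d # ys'" by (cases ys) auto
  have "c = d"
    using ceiling_hjcf_Cons[of xs c] ceiling_hjcf_Cons[of ys' d] Cons.prems ys by simp
  moreover have "xs = [] \<longleftrightarrow> ys' = []"
    using hjcf_Cons_bounds(2)[of xs c] hjcf_Cons_bounds(2)[of ys' d] Cons.prems ys \<open>c = d\<close>
    by fastforce
  moreover have "xs \<noteq> [] \<Longrightarrow> hjcf xs = hjcf ys'"
    using Cons.prems ys calculation by (simp add: hjcf_Cons)
  ultimately show ?case
    using Cons ys by auto
qed simp

lemma hjcf_replicate_2_append:
  assumes "ys \<noteq> []" "1 < hjcf ys"
  shows "1 < hjcf (replicate m 2 @ ys) \<and>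
    1 / (hjcf (replicate m 2 @ ys) - 1) = of_nat m + 1 / (hjcf ys - 1)"
proof (induction m)
  case (Suc m)
  define z where "z = hjcf (replicate m 2 @ ys)"
  have "hjcf (replicate (Suc m) 2 @ ys) = 1 + (1 - 1 / z)"
    using assms(1) by (simp add: hjcf_Cons z_def)
  moreover have "0 < 1 - 1 / z" "1 / (1 - 1 / z) = 1 + 1 / (z - 1)"
    using Suc one_div_one_minus_one_div[of z] by (simp_all add: z_def)
  ultimately show ?case
    using Suc by (simp add: z_def)
qed (use assms in simp)

lemma hjcf_replicate_2_one: "hjcf (replicate m 2 @ [1]) = 1"
  by (induction m) (auto simp: hjcf_Cons)

fun inc_hd :: "int list \<Rightarrow> int list" where
  "inc_hd [] = []"
| "inc_hd (x # xs) = (x + 1) # xs"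

lemma hjcf_inc_hd: "xs \<noteq> [] \<Longrightarrow> hjcf (inc_hd xs) = hjcf xs + 1"
  by (cases xs rule: hjcf.cases) auto

text \<open>Riemenschneider's dual string (point diagram duality).\<close>
fun hj_dual :: "int list \<Rightarrow> int list" where
  "hj_dual [] = []"
| "hj_dual [a] = replicate (nat (a - 1)) 2"
| "hj_dual (a # b # cs) = replicate (nat (a - 2)) 2 @ inc_hd (hj_dual (b # cs))"

lemma hjcf_hj_dual_excess:
  "as \<noteq> [] \<Longrightarrow> \<forall>a\<in>set as. 2 \<le> a \<Longrightarrow>
    hj_dual as \<noteq> [] \<and> 1 < hjcf (hj_dual as) \<and> 1 / (hjcf (hj_dual as) - 1) = hjcf as - 1"
proof (induction as rule: hj_dual.induct)
  case (2 a)
  then have "hj_dual [a] = replicate (nat (a - 2)) 2 @ [2]"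
    by (simp add: replicate_append_same flip: replicate_Suc)
  then show ?case
    using 2 hjcf_replicate_2_append[of "[2]" "nat (a - 2)"] by simp
next
  case (3 a b cs)
  define y where "y = hjcf (b # cs)"
  define t where "t = hjcf (hj_dual (b # cs))"
  have y: "1 < y" using 3 hjcf_gt_one[of "b # cs"] by (simp add: y_def)
  have IH: "hj_dual (b # cs) \<noteq> []" "1 < t" "1 / (t - 1) = y - 1"
    using 3 by (simp_all add: y_def t_def)
  then have "1 / t = 1 - 1 / y"
    using y by (simp add: field_simps)
  moreover have "inc_hd (hj_dual (b # cs)) \<noteq> []" "hjcf (inc_hd (hj_dual (b # cs))) = t + 1"
    using IH by (auto simp: hjcf_inc_hd t_def neq_Nil_conv)
  ultimately show ?case
    using 3 IH hjcf_replicate_2_append[of "inc_hd (hj_dual (b # cs))" "nat (a - 2)"]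
    by (simp add: y_def)
qed simp_all

lemma hjcf_hj_dual:
  assumes "as \<noteq> []" "\<forall>a\<in>set as. 2 \<le> a"
  shows "hjcf (hj_dual as) = hjcf as / (hjcf as - 1)"
proof -
  have "1 < hjcf as" using hjcf_gt_one assms by blast
  moreover have "1 < hjcf (hj_dual as)" "1 / (hjcf (hj_dual as) - 1) = hjcf as - 1"
    using hjcf_hj_dual_excess[OF assms] by simp_all
  ultimately show ?thesis
    by (simp add: field_simps)
qed

fun weight :: "int list \<Rightarrow> rat" where
  "weight [] = 0"
| "weight (b # bs) = (if b = 2 then weight bs + 1 else 3/4)"

lemma weight_nonneg: "0 \<le> weight bs"
  by (induction bs) auto

lemma weight_ge_3_4: "bs \<noteq> [] \<Longrightarrow> 3/4 \<le> weight bs"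
  by (cases bs) (auto simp: weight_nonneg add.commute add_increasing)

lemma weight_replicate_2_append: "weight (replicate m 2 @ bs) = of_nat m + weight bs"
  by (induction m) auto

text \<open>In \<open>tame_3_Cons\<close>, \<open>11/4 \<le> weight bs\<close> means that \<open>bs\<close> starts with at least
  two 2s followed by a 3, or with at least three 2s.\<close>
inductive tame :: "int list \<Rightarrow> bool" where
  tame_2: "tame [2]"
| tame_2_Cons: "tame bs \<Longrightarrow> tame (2 # bs)"
| tame_3_Cons: "tame bs \<Longrightarrow> 11/4 \<le> weight bs \<Longrightarrow> tame (3 # bs)"

lemma tame_not_Nil: "tame bs \<Longrightarrow> bs \<noteq> []"
  by (induction rule: tame.induct) auto

lemma tame_ge_2: "tame bs \<Longrightarrow> \<forall>b\<in>set bs. 2 \<le> b"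
  by (induction rule: tame.induct) auto

lemma tame_replicate_2_append: "tame bs \<Longrightarrow> tame (replicate m 2 @ bs)"
  by (induction m) (auto intro: tame_2_Cons)

lemma hj_dual_tame:
  "as \<noteq> [] \<Longrightarrow> \<forall>a\<in>set as. 5 \<le> a \<Longrightarrow>
    \<exists>ys. hj_dual as = 2 # ys \<and> tame ys \<and> 11/4 \<le> weight ys"
proof (induction as rule: hj_dual.induct)
  case (2 a)
  then have "hj_dual [a] = 2 # replicate (nat (a - 3)) 2 @ [2]"
    by (simp add: replicate_append_same flip: replicate_Suc)
  moreover have "tame (replicate (nat (a - 3)) 2 @ [2])"
    by (intro tame_replicate_2_append tame_2)
  ultimately show ?case
    using 2 by (auto simp: weight_replicate_2_append)
next
  case (3 a b cs)
  then obtain ys where ys: "hj_dual (b # cs) = 2 # ys" "tame ys" "11/4 \<le> weight ys"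
    by auto
  moreover have "nat (a - 2) = Suc (nat (a - 3))"
    using "3.prems" by auto
  ultimately have "hj_dual (a # b # cs) = 2 # replicate (nat (a - 3)) 2 @ 3 # ys"
    by simp
  moreover have "tame (replicate (nat (a - 3)) 2 @ 3 # ys)"
    using ys by (intro tame_replicate_2_append tame_3_Cons)
  ultimately show ?case
    using 3 by (auto simp: weight_replicate_2_append)
qed simp

text \<open>Prepending \<open>n\<close> to a
  value \<open>v > 1\<close> gives \<open>v'\<close> with \<open>1/(v' - (n - 1)) = 1 + 1/(v - 1)\<close>, which is why a
  leading 2 adds 1 to the weight.\<close>
definition tail_invariant :: "int list \<Rightarrow> int list \<Rightarrow> bool" where
  "tail_invariant bs ns \<longleftrightarrow>
     (\<exists>m. ns = replicate m 2 @ [1])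
   \<or> (1 < hjcf ns \<and> weight bs \<le> 1 / (hjcf ns - 1))
   \<or> (0 < hjcf ns \<and> 7/4 \<le> weight bs \<and> weight bs \<le> 1 / hjcf ns)
   \<or> (0 < hjcf ns \<and> 3 \<le> 1 / hjcf ns)"

lemma tail_invariant_Cons_fan:
  assumes "0 < hjcf (n # replicate m 2 @ [1])" "n \<le> c" "c \<le> 3"
  shows "tail_invariant (c # bs) (n # replicate m 2 @ [1])"
proof -
  have val: "hjcf (n # replicate m 2 @ [1]) = of_int n - 1"
    by (simp add: hjcf_Cons hjcf_replicate_2_one)
  with assms have "n = 2 \<or> n = 3 \<and> c = 3"
    by linarith
  then show ?thesis
  proof
    assume "n = 2"
    then have "n # replicate m 2 @ [1] = replicate (Suc m) 2 @ [1]" by simp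
    then show ?thesis unfolding tail_invariant_def by blast
  next
    assume "n = 3 \<and> c = 3"
    then show ?thesis unfolding tail_invariant_def val by simp
  qed
qed

lemma tail_invariant_Cons_above_one:
  assumes above: "1 < hjcf ns" "weight bs \<le> 1 / (hjcf ns - 1)"
    and "bs \<noteq> []" "ns \<noteq> []" "c = 2 \<or> c = 3" "n \<le> c" "c = 3 \<Longrightarrow> 11/4 \<le> weight bs"
    and pos: "0 < hjcf (n # ns)"
  shows "tail_invariant (c # bs) (n # ns)"
proof -
  define v where "v = hjcf ns"
  define w where "w = weight bs"
  have val: "hjcf (n # ns) = of_int n - 1 / v"
    using assms by (simp add: hjcf_Cons v_def)
  have key: "1 + w \<le> 1 / (1 - 1 / v)"
    using above one_div_one_minus_one_div[of v] by (simp add: v_def w_def)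
  have inv: "0 < 1 / v" "1 / v < 1" "0 < 1 - 1 / v"
    using above by (simp_all add: v_def)
  have "3/4 \<le> w"
    using weight_ge_3_4 assms w_def by simp
  have "n = 1 \<or> n = 2 \<or> n = 3"
    using val inv pos assms by linarith
  then consider (n1_c2) "n = 1" "c = 2" | (n1_c3) "n = 1" "c = 3" | (n2) "n = 2"
    | (n3) "n = 3" "c = 3"
    using assms by fastforce
  then show ?thesis
  proof cases
    case n1_c2
    then show ?thesis
      using val key inv \<open>3/4 \<le> w\<close> unfolding tail_invariant_def w_def by simp
  next
    case n1_c3
    then show ?thesis
      using val key inv assms unfolding tail_invariant_def w_def by simp
  next
    case n2
    have "weight (c # bs) \<le> 1 + w"
      using assms \<open>3/4 \<le> w\<close> by (auto simp: w_def)
    then show ?thesis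
      using n2 val key inv unfolding tail_invariant_def by simp
  next
    case n3
    then have "15/4 \<le> 1 / (1 - 1 / v)"
      using key assms by (simp add: w_def)
    then have "1 - 1 / v \<le> 4/15"
      using inv by (simp add: field_simps)
    then have "3/4 \<le> 1 / (1 + (1 - 1 / v))"
      using inv by (simp add: field_simps)
    moreover have excess: "hjcf (n # ns) - 1 = 1 + (1 - 1 / v)"
      using n3 val by simp
    ultimately have "weight (c # bs) \<le> 1 / (hjcf (n # ns) - 1)"
      using n3 by simp
    moreover have "1 < hjcf (n # ns)"
      using excess inv(3) by linarith
    ultimately show ?thesis
      unfolding tail_invariant_def by blast
  qed
qed

lemma hjcf_Cons_small:
  assumes "0 < hjcf ns" "7/4 \<le> weight bs" "weight bs \<le> 1 / hjcf ns" "ns \<noteq> []"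
    and "n \<le> c" "c \<le> 3" "c = 3 \<Longrightarrow> 11/4 \<le> weight bs" "0 < hjcf (n # ns)"
  shows "3 \<le> 1 / hjcf (n # ns)"
proof -
  have "hjcf (n # ns) \<le> 1/4"
    using assms by (cases "c = 3") (auto simp: hjcf_Cons)
  then show ?thesis
    using assms(8) by (simp add: field_simps)
qed

lemma hjcf_Cons_nonpos:
  assumes "0 < hjcf ns" "3 \<le> 1 / hjcf ns" "ns \<noteq> []" "n \<le> 3"
  shows "hjcf (n # ns) \<le> 0"
  using assms by (simp add: hjcf_Cons)

lemma tail_invariant_Cons:
  assumes "tail_invariant bs ns" "bs \<noteq> []" "ns \<noteq> []" "c = 2 \<or> c = 3" "n \<le> c"
    and "c = 3 \<Longrightarrow> 11/4 \<le> weight bs" "0 < hjcf (n # ns)"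
  shows "tail_invariant (c # bs) (n # ns)"
  using assms(1) unfolding tail_invariant_def [of bs]
proof (elim disjE exE conjE)
  fix m
  assume "ns = replicate m 2 @ [1]"
  then show ?thesis
    using tail_invariant_Cons_fan assms by auto
next
  assume "1 < hjcf ns" "weight bs \<le> 1 / (hjcf ns - 1)"
  then show ?thesis
    using tail_invariant_Cons_above_one assms by blast
next
  assume "0 < hjcf ns" "7/4 \<le> weight bs" "weight bs \<le> 1 / hjcf ns"
  then show ?thesis
    using hjcf_Cons_small[of ns bs n c] assms unfolding tail_invariant_def by auto
next
  assume "0 < hjcf ns" "3 \<le> 1 / hjcf ns"
  then show ?thesis
    using hjcf_Cons_nonpos[of ns n] assms by auto
qed

definition positive_suffixes :: "int list \<Rightarrow> bool" where
  "positive_suffixes ns \<longleftrightarrow> (\<forall>i < length ns. 0 < hjcf (drop i ns))"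

lemma positive_suffixes_Cons:
  "positive_suffixes (n # ns) \<longleftrightarrow> 0 < hjcf (n # ns) \<and> positive_suffixes ns"
  unfolding positive_suffixes_def by (simp add: All_less_Suc2)

lemma admissible_Cons: "admissible (n # ns) \<longleftrightarrow> positive_suffixes ns"
  unfolding admissible_def positive_suffixes_def
  by (auto simp: Suc_le_eq gr0_conv_Suc)

lemma tame_tail_invariant:
  "tame bs \<Longrightarrow> list_all2 (\<lambda>n b. 0 \<le> n \<and> n \<le> b) ns bs \<Longrightarrow> positive_suffixes ns
    \<Longrightarrow> tail_invariant bs ns"
proof (induction bs arbitrary: ns rule: tame.induct)
  case tame_2
  then obtain x where "ns = [x]" "0 < x" "x \<le> 2"
    by (auto simp: list_all2_Cons2 positive_suffixes_def)
  then have "ns = replicate 0 2 @ [1] \<or> ns = [2]"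
    by auto
  then show ?case
    unfolding tail_invariant_def by fastforce
next
  case (tame_2_Cons bs)
  then obtain n ns' where ns: "ns = n # ns'" "0 \<le> n" "n \<le> 2"
    "list_all2 (\<lambda>n b. 0 \<le> n \<and> n \<le> b) ns' bs"
    by (auto simp: list_all2_Cons2)
  moreover have "ns' \<noteq> []"
    using tame_2_Cons.hyps tame_not_Nil list_all2_lengthD[OF ns(4)] by fastforce
  ultimately show ?case
    using tame_2_Cons tame_not_Nil
    by (auto intro!: tail_invariant_Cons simp: positive_suffixes_Cons)
next
  case (tame_3_Cons bs)
  then obtain n ns' where ns: "ns = n # ns'" "0 \<le> n" "n \<le> 3"
    "list_all2 (\<lambda>n b. 0 \<le> n \<and> n \<le> b) ns' bs"
    by (auto simp: list_all2_Cons2)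
  moreover have "ns' \<noteq> []"
    using tame_3_Cons.hyps tame_not_Nil list_all2_lengthD[OF ns(4)] by fastforce
  ultimately show ?case
    using tame_3_Cons tame_not_Nil
    by (auto intro!: tail_invariant_Cons simp: positive_suffixes_Cons)
qed

lemma tail_invariant_Cons_eq_zero:
  assumes "tail_invariant bs ns" "11/4 \<le> weight bs" "ns \<noteq> []" "n \<le> 2"
    and "hjcf (n # ns) = 0"
  shows "n = 1 \<and> (\<exists>m. ns = replicate m 2 @ [1])"
proof -
  have n: "of_int n = 1 / hjcf ns"
    using assms(3,5) by (simp add: hjcf_Cons)
  have "\<not> (1 < hjcf ns)"
  proof
    assume "1 < hjcf ns"
    then have "0 < (of_int n :: rat)" "(of_int n :: rat) < 1"
      unfolding n by simp_all
    then show False by simp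
  qed
  moreover have "\<not> (2 < 1 / hjcf ns)"
    using assms(4) unfolding n[symmetric] by simp
  ultimately have "\<exists>m. ns = replicate m 2 @ [1]"
    using assms(1,2) unfolding tail_invariant_def by fastforce
  then show ?thesis
    using n by (auto simp: hjcf_replicate_2_one)
qed

definition zero_tuples :: "int list \<Rightarrow> int list set" where
  "zero_tuples bs = {ns. list_all2 (\<lambda>n b. 0 \<le> n \<and> n \<le> b) ns bs \<and> admissible ns \<and> hjcf ns = 0}"

lemma Z_set_eq_zero_tuples: "Z_set p q = zero_tuples (hj_b p q)"
  unfolding Z_set_def zero_tuples_def by (auto simp: list_all2_conv_all_nth all_set_conv_all_nth)

lemma one_twos_one_Suc_Suc: "one_twos_one (Suc (Suc m)) = 1 # replicate m 2 @ [1]"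
  by (rule nth_equalityI) (auto simp: one_twos_one_def nth_Cons nth_append split: nat.splits)

lemma one_twos_one_mem_zero_tuples:
  assumes "2 \<le> length bs" "\<forall>b\<in>set bs. 2 \<le> b"
  shows "one_twos_one (length bs) \<in> zero_tuples bs"
proof -
  obtain m where m: "length bs = Suc (Suc m)"
    using assms(1) by (metis add_2_eq_Suc le_Suc_ex)
  define ns :: "int list" where "ns = 1 # replicate m 2 @ [1]"
  have "list_all2 (\<lambda>n b. 0 \<le> n \<and> n \<le> b) ns bs"
  proof (rule list_all2_all_nthI)
    fix i
    assume i: "i < length ns"
    then have "ns ! i \<in> {1, 2}" "2 \<le> bs ! i"
      using nth_mem[OF i] assms(2) m by (auto simp: ns_def)
    then show "0 \<le> ns ! i \<and> ns ! i \<le> bs ! i"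
      by auto
  qed (simp add: m ns_def)
  moreover have "positive_suffixes (replicate m 2 @ [1])"
    unfolding positive_suffixes_def by (auto simp: hjcf_replicate_2_one)
  ultimately show ?thesis
    unfolding zero_tuples_def m one_twos_one_Suc_Suc ns_def
    by (simp add: admissible_Cons hjcf_Cons hjcf_replicate_2_one)
qed

lemma zero_tuples_tame:
  assumes "tame ys" "11/4 \<le> weight ys"
  shows "zero_tuples (2 # ys) = {one_twos_one (length (2 # ys))}"
proof
  show "{one_twos_one (length (2 # ys))} \<subseteq> zero_tuples (2 # ys)"
    using one_twos_one_mem_zero_tuples[of "2 # ys"] tame_not_Nil[OF assms(1)] tame_ge_2[OF assms(1)]
    by (simp add: Suc_le_eq)
next
  show "zero_tuples (2 # ys) \<subseteq> {one_twos_one (length (2 # ys))}"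
  proof
    fix ns
    assume "ns \<in> zero_tuples (2 # ys)"
    then obtain n ns' where ns: "ns = n # ns'" "n \<le> 2" "hjcf (n # ns') = 0"
      "list_all2 (\<lambda>n b. 0 \<le> n \<and> n \<le> b) ns' ys" "positive_suffixes ns'"
      by (auto simp: zero_tuples_def list_all2_Cons2 admissible_Cons)
    then have "ns' \<noteq> []" "length ns' = length ys"
      using tame_not_Nil[OF assms(1)] list_all2_lengthD by auto
    moreover have "tail_invariant ys ns'"
      using tame_tail_invariant assms(1) ns by blast
    ultimately obtain m where "n = 1" "ns' = replicate m 2 @ [1]"
      using tail_invariant_Cons_eq_zero assms(2) ns by blast
    moreover from this have "length ys = Suc m"
      using \<open>length ns' = length ys\<close> by simp
    ultimately show "ns \<in> {one_twos_one (length (2 # ys))}"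
      using ns by (simp add: one_twos_one_Suc_Suc)
  qed
qed

lemma hj_b_eqI:
  assumes "bs \<noteq> []" "\<forall>b\<in>set bs. 2 \<le> b" "hjcf bs = of_int p / of_int (p - q)"
  shows "hj_b p q = bs"
  unfolding hj_b_def using assms hjcf_inj by (intro the_equality) auto

theorem lemma2p3:
  fixes p q :: int
  assumes "p > q" and "q \<ge> 1" and "coprime p q"
    and "\<exists>as. as \<noteq> [] \<and> (\<forall>a\<in>set as. a \<ge> 5) \<and> hjcf as = of_int p / of_int q"
  shows "Z_set p q = {one_twos_one (length (hj_b p q))}"
proof -
  obtain as where as: "as \<noteq> []" "\<forall>a\<in>set as. 5 \<le> a" "hjcf as = of_int p / of_int q"
    using assms(4) by blast
  then obtain ys where ys: "hj_dual as = 2 # ys" "tame ys" "11/4 \<le> weight ys"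
    using hj_dual_tame by blast
  have "hjcf (hj_dual as) = hjcf as / (hjcf as - 1)"
    using hjcf_hj_dual as by force
  then have "hjcf (hj_dual as) = of_int p / of_int (p - q)"
    using as assms(1,2) by (simp add: field_simps)
  then have "hj_b p q = hj_dual as"
    using ys tame_ge_2 by (intro hj_b_eqI) auto
  then show ?thesis
    using zero_tuples_tame[OF ys(2,3)] ys(1) by (simp add: Z_set_eq_zero_tuples)
qed

end
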